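(* A set $F$ of pairs $(K,a)$ ($K$ a graph, $a\in\mathbb{Z}_2^{*V(K)}$, taken up to isomorphism) is an easy full graph fibration if and only if $F(K)$ is a normal subgroup of $\mathbb{Z}_2^{*V(K)}$ for every graph $K$ and, for every graph homomorphism $\phi\colon H\to K$ between any two graphs, $\phi(F(H))\subset F(K)$.
   Context: Graphs are finite, undirected, without multiple edges, loops allowed, considered up to isomorphism; $N_k$ is the edgeless graph on $k$ vertices. A graph homomorphism is a vertex map sending edges (including loops) to edges. For a set $V$, $\mathbb{Z}_2^{*V}$ is the group generated by $V$ subject to $v^2=e$; a map $\phi\colon V\to V'$ induces a homomorphism $\mathbb{Z}_2^{*V}\to\mathbb{Z}_2^{*V'}$, also denoted $\phi$. Pairs are taken up to the equivalence $(K,a)\equiv(K',\phi(a))$ for isomorphisms $\phi\colon K\to K'$, and $F(K):=\{a\mid (K,a)\in F\}$. For a partition $\pi$ of $V(K)$, the quotient $K/\pi$ has the blocks as vertices with an edge between two (possibly equal) blocks iff $K$ has an edge between some of their elements; $q_\pi\colon V(K)\to V(K/\pi)$ the quotient map. A vertex overlap of graphs $K,H$ is a subset $f\subset V(K)\times V(H)$ in which each vertex occurs at most once; $K\cup_fH$ is the quotient of $K\sqcup H$ identifying $v$ with $w$ for $(v,w)\in f$; $f_K,f_H$ are the induced maps into $V(K\cup_fH)$. A graph fibration is such a set $F$ with $(N_0,e),(N_1,e)\in F$ and: (F1) each $F(K)$ is empty or a normal subgroup; (F2) $\phi(F(K))=F(K)$ for every automorphism $\phi$ of $K$; (F3) if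 $(K,a),(H,b)\in F$ and $f$ is a vertex overlap, then $(K\cup_fH,f_K(a)f_H(b))\in F$. It is full if $F(K)\ne\emptyset$ for all graphs $K$, and easy if (F4): for $F(K)\neq\emptyset$ and every partition $\pi$ of $V(K)$, $q_\pi(F(K))\subset F(K/\pi)$. *)

theory Defs
  imports "HOL-Algebra.Coset"
begin

text \<open>A graph is a pair (V, E) with vertices drawn from nat; E is a symmetric relation
on V, i.e. an undirected edge set without multiple edges; loops (v,v) are allowed.
Graphs are considered up to isomorphism: every finite graph has such a representative.\<close>

type_synonym graph = "nat set \<times> (nat \<times> nat) set"

definition wf_graph :: "graph \<Rightarrow> bool" where
  "wf_graph G \<longleftrightarrow> finite (fst G) \<and> snd G \<subseteq> fst G \<times> fst G \<and> sym (snd G)"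

definition edge_image :: "(nat \<Rightarrow> nat) \<Rightarrow> (nat \<times> nat) set \<Rightarrow> (nat \<times> nat) set" where
  "edge_image \<phi> E = (\<lambda>(u,v). (\<phi> u, \<phi> v)) ` E"

definition graph_hom :: "(nat \<Rightarrow> nat) \<Rightarrow> graph \<Rightarrow> graph \<Rightarrow> bool" where
  "graph_hom \<phi> H K \<longleftrightarrow> \<phi> ` fst H \<subseteq> fst K \<and> edge_image \<phi> (snd H) \<subseteq> snd K"

definition graph_iso :: "(nat \<Rightarrow> nat) \<Rightarrow> graph \<Rightarrow> graph \<Rightarrow> bool" where
  "graph_iso \<phi> H K \<longleftrightarrow> bij_betw \<phi> (fst H) (fst K) \<and> edge_image \<phi> (snd H) = snd K"

definition edgeless :: "nat set \<Rightarrow> graph" where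
  "edgeless V = (V, {})"

fun red :: "nat list \<Rightarrow> nat list" where
  "red [] = []"
| "red (x # xs) = (case red xs of [] \<Rightarrow> [x] | y # ys \<Rightarrow> (if x = y then ys else x # y # ys))"

definition reduced :: "nat list \<Rightarrow> bool" where
  "reduced w \<longleftrightarrow> successively (\<noteq>) w"

text \<open>Z_2^{*V}: generated by V subject to v^2 = e; elements are reduced words,
product is concatenation followed by cancellation, identity is the empty word.\<close>

definition Z2free :: "nat set \<Rightarrow> nat list monoid" where
  "Z2free V = \<lparr>carrier = {w. set w \<subseteq> V \<and> reduced w}, mult = (\<lambda>a b. red (a @ b)), one = []\<rparr>"

definition mapw :: "(nat \<Rightarrow> nat) \<Rightarrow> nat list \<Rightarrow> nat list" where
  "mapw \<phi> a = red (map \<phi> a)"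

definition Fof :: "(graph \<times> nat list) set \<Rightarrow> graph \<Rightarrow> nat list set" where
  "Fof F K = {a. (K, a) \<in> F}"

text \<open>Standing conventions: F consists of pairs (K,a) with K a graph and a in Z_2^{*V(K)},
and F is closed under the equivalence (K,a) == (K', phi(a)) for isomorphisms phi.\<close>
definition valid_pairs :: "(graph \<times> nat list) set \<Rightarrow> bool" where
  "valid_pairs F \<longleftrightarrow> (\<forall>K a. (K, a) \<in> F \<longrightarrow> wf_graph K \<and> a \<in> carrier (Z2free (fst K)))"

definition iso_closed :: "(graph \<times> nat list) set \<Rightarrow> bool" where
  "iso_closed F \<longleftrightarrow> (\<forall>K K' \<phi> a. (K, a) \<in> F \<longrightarrow> wf_graph K' \<longrightarrow> graph_iso \<phi> K K'
      \<longrightarrow> (K', mapw \<phi> a) \<in> F)"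

definition vertex_overlap :: "(nat \<times> nat) set \<Rightarrow> graph \<Rightarrow> graph \<Rightarrow> bool" where
  "vertex_overlap f K H \<longleftrightarrow> f \<subseteq> fst K \<times> fst H \<and>
     (\<forall>v w v' w'. (v, w) \<in> f \<longrightarrow> (v', w') \<in> f \<longrightarrow> (v = v' \<longleftrightarrow> w = w'))"

text \<open>G together with fK, fH realises (up to isomorphism) the glued graph K \<union>_f H
with its induced vertex maps: G is the quotient of the disjoint union of K and H
identifying v with w exactly for (v,w) in f.\<close>
definition is_gluing :: "graph \<Rightarrow> graph \<Rightarrow> (nat \<times> nat) set \<Rightarrow> graph
    \<Rightarrow> (nat \<Rightarrow> nat) \<Rightarrow> (nat \<Rightarrow> nat) \<Rightarrow> bool" where
  "is_gluing K H f G fK fH \<longleftrightarrow>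
     inj_on fK (fst K) \<and> inj_on fH (fst H) \<and>
     fst G = fK ` fst K \<union> fH ` fst H \<and>
     snd G = edge_image fK (snd K) \<union> edge_image fH (snd H) \<and>
     (\<forall>v\<in>fst K. \<forall>w\<in>fst H. fK v = fH w \<longleftrightarrow> (v, w) \<in> f)"

text \<open>G together with q realises (up to isomorphism) the quotient K/pi with quotient map
q_pi, where pi is the partition of V(K) into the fibres of q.\<close>
definition is_quotient :: "graph \<Rightarrow> graph \<Rightarrow> (nat \<Rightarrow> nat) \<Rightarrow> bool" where
  "is_quotient K G q \<longleftrightarrow> q ` fst K = fst G \<and> snd G = edge_image q (snd K)"

definition graph_fibration :: "(graph \<times> nat list) set \<Rightarrow> bool" where
  "graph_fibration F \<longleftrightarrow>
     (edgeless {}, []) \<in> F \<and> (edgeless {0}, []) \<in> F \<and>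
     (\<forall>K. wf_graph K \<longrightarrow> Fof F K = {} \<or> Fof F K \<lhd> Z2free (fst K)) \<and>
     (\<forall>K \<phi>. wf_graph K \<longrightarrow> graph_iso \<phi> K K \<longrightarrow> mapw \<phi> ` Fof F K = Fof F K) \<and>
     (\<forall>K H a b f G fK fH. (K, a) \<in> F \<longrightarrow> (H, b) \<in> F \<longrightarrow> vertex_overlap f K H \<longrightarrow>
        wf_graph G \<longrightarrow> is_gluing K H f G fK fH \<longrightarrow>
        (G, mapw fK a \<otimes>\<^bsub>Z2free (fst G)\<^esub> mapw fH b) \<in> F)"

definition full_fibration :: "(graph \<times> nat list) set \<Rightarrow> bool" where
  "full_fibration F \<longleftrightarrow> graph_fibration F \<and> (\<forall>K. wf_graph K \<longrightarrow> Fof F K \<noteq> {})"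

definition easy_fibration :: "(graph \<times> nat list) set \<Rightarrow> bool" where
  "easy_fibration F \<longleftrightarrow> graph_fibration F \<and>
     (\<forall>K G q. wf_graph K \<longrightarrow> Fof F K \<noteq> {} \<longrightarrow> wf_graph G \<longrightarrow> is_quotient K G q \<longrightarrow>
        mapw q ` Fof F K \<subseteq> Fof F G)"

end

theory Submission
  imports Defs
begin

text \<open>For an easy full fibration, a homomorphism \<open>\<phi> : H \<rightarrow> K\<close> factors as the quotient map
onto its image, to which (F4) applies, followed by the inclusion of a subgraph of \<open>K\<close>; gluing
along that inclusion with \<open>(K, e)\<close>, which lies in \<open>F\<close> because \<open>F(K)\<close> is a subgroup, is (F3).
Conversely, closure under homomorphisms contains (F4), contains (F2) because automorphisms
and their inverses are homomorphisms, and yields (F3) because the maps into a gluing are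
homomorphisms and \<open>F(K \<union>\<^sub>f H)\<close> is closed under products.\<close>

lemma reduced_Cons: "reduced (x # xs) \<longleftrightarrow> reduced xs \<and> (xs = [] \<or> x \<noteq> hd xs)"
  unfolding reduced_def by (cases xs) auto

lemma reduced_red: "reduced (red w)"
proof (induction w)
  case Nil
  then show ?case by (simp add: reduced_def)
next
  case (Cons x xs)
  then show ?case by (auto split: list.splits simp: reduced_Cons)
qed

lemma red_reduced: "reduced w \<Longrightarrow> red w = w"
  by (induction w) (auto split: list.splits simp: reduced_Cons)

lemma red_red [simp]: "red (red w) = red w"
  by (rule red_reduced[OF reduced_red])

lemma red_Cons_Cons: "red (x # x # w) = red w"
proof (cases "red w")
  case (Cons y ys)
  then have "reduced (y # ys)" using reduced_red[of w] by simp
  with Cons show ?thesis by (cases ys) (auto simp: reduced_Cons)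
qed simp

lemma red_Cons_red: "red (x # red w) = red (x # w)"
  by simp

text \<open>Renaming letters may create new cancelling pairs but never destroys one.\<close>

lemma red_map_red: "red (map \<phi> (red w)) = red (map \<phi> w)"
proof (induction w)
  case (Cons x xs)
  have "red (map \<phi> (red (x # xs))) = red (\<phi> x # red (map \<phi> (red xs)))"
  proof (cases "red xs")
    case (Cons y ys)
    have "red (map \<phi> (red (x # xs))) = red (\<phi> x # \<phi> y # map \<phi> ys)"
    proof (cases "x = y")
      case True
      then have "red (x # xs) = ys" using Cons by simp
      then show ?thesis by (simp only: True red_Cons_Cons)
    next
      case False
      then have "red (x # xs) = x # y # ys" using Cons by simp
      then show ?thesis by (simp only: list.map)
    qed
    then show ?thesis using Cons by (simp only: red_Cons_red list.map)
  qed simp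
  also have "\<dots> = red (map \<phi> (x # xs))"
    using Cons.IH by simp
  finally show ?case .
qed simp

lemma mapw_mapw: "mapw \<phi> (mapw \<psi> a) = mapw (\<phi> \<circ> \<psi>) a"
  by (simp add: mapw_def red_map_red)

lemma mapw_eq_self:
  assumes "reduced a" and "\<And>v. v \<in> set a \<Longrightarrow> \<phi> v = v"
  shows "mapw \<phi> a = a"
proof -
  have "map \<phi> a = a" using assms(2) by (simp add: map_idI)
  then show ?thesis using red_reduced[OF assms(1)] by (simp add: mapw_def)
qed

lemma normal_Z2free_one: "N \<lhd> Z2free V \<Longrightarrow> [] \<in> N"
  using subgroup.one_closed[OF normal_imp_subgroup] by (fastforce simp: Z2free_def)

lemma wf_graph_image: "wf_graph H \<Longrightarrow> wf_graph (\<phi> ` fst H, edge_image \<phi> (snd H))"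
  by (auto simp: wf_graph_def edge_image_def sym_def)

lemma is_quotient_image: "is_quotient H (\<phi> ` fst H, edge_image \<phi> (snd H)) \<phi>"
  by (simp add: is_quotient_def)

lemma is_quotient_imp_graph_hom: "is_quotient K G q \<Longrightarrow> graph_hom q K G"
  by (simp add: is_quotient_def graph_hom_def)

lemma is_gluing_imp_graph_hom:
  "is_gluing K H f G fK fH \<Longrightarrow> graph_hom fK K G \<and> graph_hom fH H G"
  by (auto simp: is_gluing_def graph_hom_def)

lemma graph_iso_imp_graph_hom: "graph_iso \<phi> H K \<Longrightarrow> graph_hom \<phi> H K"
  by (simp add: graph_iso_def graph_hom_def bij_betw_def)

lemma graph_iso_inv_into:
  assumes "wf_graph H" and "graph_iso \<phi> H K"
  shows "graph_iso (inv_into (fst H) \<phi>) K H"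
proof -
  have bij: "bij_betw \<phi> (fst H) (fst K)" and edges: "snd K = edge_image \<phi> (snd H)"
    using assms(2) by (auto simp: graph_iso_def)
  have "snd H \<subseteq> fst H \<times> fst H" using assms(1) by (simp add: wf_graph_def)
  then have "edge_image (inv_into (fst H) \<phi>) (snd K) = snd H"
    using bij_betw_imp_inj_on[OF bij]
    by (force simp: edges edge_image_def image_image intro: rev_image_eqI)
  then show ?thesis using bij_betw_inv_into[OF bij] by (simp add: graph_iso_def)
qed

lemma vertex_overlap_Id_on: "fst G \<subseteq> fst K \<Longrightarrow> vertex_overlap (Id_on (fst G)) G K"
  by (auto simp: vertex_overlap_def)

lemma is_gluing_subgraph:
  "fst G \<subseteq> fst K \<Longrightarrow> snd G \<subseteq> snd K \<Longrightarrow> is_gluing G K (Id_on (fst G)) K id id"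
  by (auto simp: is_gluing_def edge_image_def)

lemma Fof_iff [simp]: "a \<in> Fof F K \<longleftrightarrow> (K, a) \<in> F"
  by (simp add: Fof_def)

lemma valid_pairsD:
  "valid_pairs F \<Longrightarrow> (K, a) \<in> F \<Longrightarrow> wf_graph K \<and> set a \<subseteq> fst K \<and> reduced a"
  unfolding valid_pairs_def Z2free_def by (drule spec2[of _ K a]) simp

lemma graph_fibration_fibre:
  "graph_fibration F \<Longrightarrow> wf_graph K \<Longrightarrow> Fof F K = {} \<or> Fof F K \<lhd> Z2free (fst K)"
  unfolding graph_fibration_def by blast

lemma graph_fibration_gluing:
  assumes "graph_fibration F" and "(K, a) \<in> F" and "(H, b) \<in> F" and "vertex_overlap f K H"
    and "wf_graph G" and "is_gluing K H f G fK fH"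
  shows "(G, mapw fK a \<otimes>\<^bsub>Z2free (fst G)\<^esub> mapw fH b) \<in> F"
proof -
  have "\<forall>K H a b f G fK fH. (K, a) \<in> F \<longrightarrow> (H, b) \<in> F \<longrightarrow> vertex_overlap f K H \<longrightarrow>
        wf_graph G \<longrightarrow> is_gluing K H f G fK fH \<longrightarrow>
        (G, mapw fK a \<otimes>\<^bsub>Z2free (fst G)\<^esub> mapw fH b) \<in> F"
    using assms(1) unfolding graph_fibration_def by (elim conjE)
  then show ?thesis using assms(2-6) by blast
qed

lemma full_fibrationD:
  assumes "full_fibration F"
  shows "graph_fibration F" and "wf_graph K \<Longrightarrow> Fof F K \<noteq> {}"
  using assms unfolding full_fibration_def by blast+

lemma easy_fibrationD:
  "easy_fibration F \<Longrightarrow> wf_graph K \<Longrightarrow> Fof F K \<noteq> {} \<Longrightarrow> wf_graph G \<Longrightarrow>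
    is_quotient K G q \<Longrightarrow> mapw q ` Fof F K \<subseteq> Fof F G"
  unfolding easy_fibration_def by blast

lemma normal_if_full_fibration:
  assumes "full_fibration F" and "wf_graph K"
  shows "Fof F K \<lhd> Z2free (fst K)"
  using graph_fibration_fibre[OF full_fibrationD(1)] full_fibrationD(2) assms by blast

definition hom_closed :: "(graph \<times> nat list) set \<Rightarrow> bool" where
  "hom_closed F \<longleftrightarrow> (\<forall>H K \<phi>. wf_graph H \<longrightarrow> wf_graph K \<longrightarrow> graph_hom \<phi> H K \<longrightarrow>
     mapw \<phi> ` Fof F H \<subseteq> Fof F K)"

lemma hom_closedD:
  "hom_closed F \<Longrightarrow> wf_graph H \<Longrightarrow> wf_graph K \<Longrightarrow> graph_hom \<phi> H K \<Longrightarrow>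
    (H, a) \<in> F \<Longrightarrow> (K, mapw \<phi> a) \<in> F"
  unfolding hom_closed_def Fof_def by blast

lemma graph_fibration_subgraph_closed:
  assumes "graph_fibration F" and "valid_pairs F"
    and "(K, []) \<in> F" and "(G, c) \<in> F" and "wf_graph K"
    and "fst G \<subseteq> fst K" and "snd G \<subseteq> snd K"
  shows "(K, c) \<in> F"
proof -
  have "(K, mapw id c \<otimes>\<^bsub>Z2free (fst K)\<^esub> mapw id []) \<in> F"
    using graph_fibration_gluing[OF assms(1,4,3) vertex_overlap_Id_on assms(5)
        is_gluing_subgraph] assms(6,7) by blast
  moreover have "mapw id c \<otimes>\<^bsub>Z2free (fst K)\<^esub> mapw id [] = c"
    using valid_pairsD[OF assms(2,4)] by (simp add: Z2free_def mapw_def red_reduced)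
  ultimately show ?thesis by simp
qed

lemma hom_closed_if_easy_full_fibration:
  assumes easy: "easy_fibration F" and full: "full_fibration F" and "valid_pairs F"
  shows "hom_closed F"
  unfolding hom_closed_def
proof (intro allI impI subsetI)
  fix H K \<phi> c
  assume "wf_graph H" "wf_graph K" "graph_hom \<phi> H K" "c \<in> mapw \<phi> ` Fof F H"
  define G where "G = (\<phi> ` fst H, edge_image \<phi> (snd H))"
  have "mapw \<phi> ` Fof F H \<subseteq> Fof F G"
    using easy_fibrationD[OF easy \<open>wf_graph H\<close> full_fibrationD(2)[OF full \<open>wf_graph H\<close>]]
      wf_graph_image[OF \<open>wf_graph H\<close>] is_quotient_image
    unfolding G_def by blast
  then have "(G, c) \<in> F" using \<open>c \<in> mapw \<phi> ` Fof F H\<close> by auto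
  moreover have "(K, []) \<in> F"
    using normal_Z2free_one[OF normal_if_full_fibration[OF full \<open>wf_graph K\<close>]] by simp
  moreover have "fst G \<subseteq> fst K" and "snd G \<subseteq> snd K"
    using \<open>graph_hom \<phi> H K\<close> by (auto simp: G_def graph_hom_def)
  ultimately have "(K, c) \<in> F"
    using graph_fibration_subgraph_closed[OF full_fibrationD(1)[OF full] \<open>valid_pairs F\<close>]
      \<open>wf_graph K\<close> by blast
  then show "c \<in> Fof F K" by simp
qed

lemma automorphism_invariant_if_hom_closed:
  assumes "hom_closed F" and "valid_pairs F" and "wf_graph K" and "graph_iso \<phi> K K"
  shows "mapw \<phi> ` Fof F K = Fof F K"
proof
  define \<psi> where "\<psi> = inv_into (fst K) \<phi>"
  have hom_\<phi>: "graph_hom \<phi> K K" and hom_\<psi>: "graph_hom \<psi> K K"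
    using graph_iso_imp_graph_hom graph_iso_inv_into assms(3,4) by (simp_all add: \<psi>_def)
  have \<phi>_\<psi>: "\<phi> (\<psi> v) = v" if "v \<in> fst K" for v
    using assms(4) that by (simp add: \<psi>_def graph_iso_def bij_betw_def f_inv_into_f)
  show "mapw \<phi> ` Fof F K \<subseteq> Fof F K"
    using hom_closedD[OF assms(1,3,3) hom_\<phi>] by auto
  show "Fof F K \<subseteq> mapw \<phi> ` Fof F K"
  proof
    fix a assume "a \<in> Fof F K"
    then have "(K, mapw \<psi> a) \<in> F" and "set a \<subseteq> fst K" and "reduced a"
      using hom_closedD[OF assms(1,3,3) hom_\<psi>] valid_pairsD[OF assms(2)] by auto
    moreover have "mapw \<phi> (mapw \<psi> a) = a"
      unfolding mapw_mapw using calculation \<phi>_\<psi> by (intro mapw_eq_self) auto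
    ultimately show "a \<in> mapw \<phi> ` Fof F K" by (metis Fof_iff image_eqI)
  qed
qed

lemma gluing_closed_if_hom_closed:
  assumes "hom_closed F" and "valid_pairs F" and "Fof F G \<lhd> Z2free (fst G)"
    and "(K, a) \<in> F" and "(H, b) \<in> F" and "wf_graph G" and "is_gluing K H f G fK fH"
  shows "(G, mapw fK a \<otimes>\<^bsub>Z2free (fst G)\<^esub> mapw fH b) \<in> F"
proof -
  have "wf_graph K" and "wf_graph H"
    using valid_pairsD[OF assms(2)] assms(4,5) by blast+
  moreover have "graph_hom fK K G" and "graph_hom fH H G"
    using is_gluing_imp_graph_hom[OF assms(7)] by blast+
  ultimately have "mapw fK a \<in> Fof F G" and "mapw fH b \<in> Fof F G"
    using hom_closedD[OF assms(1)] assms(4-6) by simp_all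
  then show ?thesis
    using subgroup.m_closed[OF normal_imp_subgroup[OF assms(3)]] by simp
qed

lemma easy_full_fibration_if_hom_closed:
  assumes hom: "hom_closed F" and "valid_pairs F"
    and normal: "\<And>K. wf_graph K \<Longrightarrow> Fof F K \<lhd> Z2free (fst K)"
  shows "easy_fibration F \<and> full_fibration F"
proof -
  have fibre_one: "(K, []) \<in> F" if "wf_graph K" for K
    using normal_Z2free_one[OF normal[OF that]] by simp
  have "graph_fibration F"
    unfolding graph_fibration_def
  proof (intro conjI allI impI)
    show "(edgeless {}, []) \<in> F" and "(edgeless {0}, []) \<in> F"
      using fibre_one by (simp_all add: wf_graph_def edgeless_def)
  next
    fix K :: graph assume "wf_graph K"
    then show "Fof F K = {} \<or> Fof F K \<lhd> Z2free (fst K)" using normal by blast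
  next
    fix K :: graph and \<phi> assume "wf_graph K" and "graph_iso \<phi> K K"
    then show "mapw \<phi> ` Fof F K = Fof F K"
      using automorphism_invariant_if_hom_closed[OF hom \<open>valid_pairs F\<close>] by blast
  next
    fix K H a b f G fK fH
    assume "(K, a) \<in> F" and "(H, b) \<in> F" and "wf_graph G" and "is_gluing K H f G fK fH"
    then show "(G, mapw fK a \<otimes>\<^bsub>Z2free (fst G)\<^esub> mapw fH b) \<in> F"
      using gluing_closed_if_hom_closed[OF hom \<open>valid_pairs F\<close> normal] by blast
  qed
  moreover have "Fof F K \<noteq> {}" if "wf_graph K" for K
    using fibre_one[OF that] Fof_iff by blast
  moreover have "mapw q ` Fof F K \<subseteq> Fof F G"
    if "wf_graph K" and "wf_graph G" and "is_quotient K G q" for K G q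
    using hom that is_quotient_imp_graph_hom unfolding hom_closed_def by blast
  ultimately show ?thesis
    unfolding easy_fibration_def full_fibration_def by blast
qed

theorem proposition2p18:
  fixes F :: "(graph \<times> nat list) set"
  assumes "valid_pairs F" and "iso_closed F"
  shows "(easy_fibration F \<and> full_fibration F) \<longleftrightarrow>
    ((\<forall>K. wf_graph K \<longrightarrow> Fof F K \<lhd> Z2free (fst K)) \<and>
     (\<forall>H K \<phi>. wf_graph H \<longrightarrow> wf_graph K \<longrightarrow> graph_hom \<phi> H K \<longrightarrow>
        mapw \<phi> ` Fof F H \<subseteq> Fof F K))"
  unfolding hom_closed_def[symmetric]
proof
  assume "easy_fibration F \<and> full_fibration F"
  then show "(\<forall>K. wf_graph K \<longrightarrow> Fof F K \<lhd> Z2free (fst K)) \<and> hom_closed F"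
    using hom_closed_if_easy_full_fibration[OF _ _ assms(1)] normal_if_full_fibration by blast
next
  assume "(\<forall>K. wf_graph K \<longrightarrow> Fof F K \<lhd> Z2free (fst K)) \<and> hom_closed F"
  then show "easy_fibration F \<and> full_fibration F"
    using easy_full_fibration_if_hom_closed[OF _ assms(1)] by blast
qed

end
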